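(* Let $\mathcal E$ be a nest on a complex Banach space $X$ and let $\mathcal J$ be a $\mathcal T(\mathcal E)$-bimodule with essential support function $\Phi^e_{\mathcal J}$. Let $L,N\in\mathcal E$ be such that $L_-\subsetneq\Phi^e_{\mathcal J}(N)$. Then for every $f\in(N_-)^\perp$ and every $x\in L$, the operator $f\otimes x$ lies in $\mathcal J$.
   Context: A nest $\mathcal E$ on $X$ is a family of closed linear subspaces of $X$, totally ordered by inclusion, containing $\{0\}$ and $X$, closed under arbitrary meets $\wedge$ (intersections) and joins $\vee$ (norm-closed linear spans of unions). For $E\in\mathcal E$, $E_-=\vee\{F\in\mathcal E: F\subsetneq E\}$. $\mathcal T(\mathcal E)=\{T\in\mathcal B(X): TE\subseteq E\ \forall E\in\mathcal E\}$. A $\mathcal T(\mathcal E)$-bimodule is a linear subspace $\mathcal J\subseteq\mathcal B(X)$ with $\mathcal T(\mathcal E)\mathcal J\subseteq\mathcal J$ and $\mathcal J\mathcal T(\mathcal E)\subseteq\mathcal J$. For linear subspaces $M,L$ of $X$ with $L$ closed, $M/L$ denotes $\{m+L: m\in M\}\subseteq X/L$ and $\dim(M/L)$ its (algebraic) dimension. The essential support function of $\mathcal J$ is $\Phi^e_{\mathcal J}(N)=\wedge\{L\in\mathcal E: \dim(TN/L)<\infty\ \forall T\in\mathcal J\}$ for $N\in\mathcal E$. For $S\subseteq X$, $S^\perp=\{f\in X^*: f(S)=\{0\}\}$; $f\otimes x$ is the operator $y\mapsto f(y)x$. *)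

theory Defs
  imports "HOL-Analysis.Analysis"
begin

text \<open>Complex Banach spaces: a real Banach space with a compatible complex scalar
multiplication (HOL-Analysis has no complex vector space class).\<close>

class complex_banach = banach +
  fixes scaleC :: "complex \<Rightarrow> 'a \<Rightarrow> 'a" (infixr \<open>*\<^sub>C\<close> 75)
  assumes scaleC_add_right: "a *\<^sub>C (x + y) = a *\<^sub>C x + a *\<^sub>C y"
    and scaleC_add_left: "(a + b) *\<^sub>C x = a *\<^sub>C x + b *\<^sub>C x"
    and scaleC_scaleC: "a *\<^sub>C (b *\<^sub>C x) = (a * b) *\<^sub>C x"
    and scaleC_one: "1 *\<^sub>C x = x"
    and scaleC_of_real: "complex_of_real r *\<^sub>C x = r *\<^sub>R x"
    and norm_scaleC: "norm (a *\<^sub>C x) = cmod a * norm x"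

definition bounded_op :: "('a::complex_banach \<Rightarrow> 'a) \<Rightarrow> bool" where
  "bounded_op T \<longleftrightarrow> (\<forall>x y. T (x + y) = T x + T y) \<and> (\<forall>c x. T (c *\<^sub>C x) = c *\<^sub>C T x)
     \<and> (\<exists>K. \<forall>x. norm (T x) \<le> norm x * K)"

definition bounded_functional :: "('a::complex_banach \<Rightarrow> complex) \<Rightarrow> bool" where
  "bounded_functional f \<longleftrightarrow> (\<forall>x y. f (x + y) = f x + f y) \<and> (\<forall>c x. f (c *\<^sub>C x) = c * f x)
     \<and> (\<exists>K. \<forall>x. norm (f x) \<le> norm x * K)"

definition csubspace :: "'a::complex_banach set \<Rightarrow> bool" where
  "csubspace S \<longleftrightarrow> 0 \<in> S \<and> (\<forall>x\<in>S. \<forall>y\<in>S. x + y \<in> S) \<and> (\<forall>c. \<forall>x\<in>S. c *\<^sub>C x \<in> S)"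

definition closed_csubspace :: "'a::complex_banach set \<Rightarrow> bool" where
  "closed_csubspace S \<longleftrightarrow> csubspace S \<and> closed S"

definition cspan :: "'a::complex_banach set \<Rightarrow> 'a set" where
  "cspan A = \<Inter> {S. csubspace S \<and> A \<subseteq> S}"

definition cjoin :: "'a::complex_banach set set \<Rightarrow> 'a set" where
  "cjoin F = closure (cspan (\<Union> F))"

definition nest :: "'a::complex_banach set set \<Rightarrow> bool" where
  "nest \<E> \<longleftrightarrow> (\<forall>E\<in>\<E>. closed_csubspace E)
     \<and> (\<forall>E\<in>\<E>. \<forall>F\<in>\<E>. E \<subseteq> F \<or> F \<subseteq> E)
     \<and> {0} \<in> \<E> \<and> UNIV \<in> \<E>
     \<and> (\<forall>F. F \<subseteq> \<E> \<longrightarrow> \<Inter> F \<in> \<E>)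
     \<and> (\<forall>F. F \<subseteq> \<E> \<longrightarrow> cjoin F \<in> \<E>)"

definition nest_minus :: "'a::complex_banach set set \<Rightarrow> 'a set \<Rightarrow> 'a set" where
  "nest_minus \<E> E = cjoin {F \<in> \<E>. F \<subset> E}"

definition nest_alg :: "'a::complex_banach set set \<Rightarrow> ('a \<Rightarrow> 'a) set" where
  "nest_alg \<E> = {T. bounded_op T \<and> (\<forall>E\<in>\<E>. T ` E \<subseteq> E)}"

definition bimodule :: "'a::complex_banach set set \<Rightarrow> ('a \<Rightarrow> 'a) set \<Rightarrow> bool" where
  "bimodule \<E> J \<longleftrightarrow> J \<subseteq> {T. bounded_op T}
     \<and> (\<lambda>x. 0) \<in> J \<and> (\<forall>S\<in>J. \<forall>T\<in>J. (\<lambda>x. S x + T x) \<in> J)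
     \<and> (\<forall>c. \<forall>T\<in>J. (\<lambda>x. c *\<^sub>C T x) \<in> J)
     \<and> (\<forall>A\<in>nest_alg \<E>. \<forall>T\<in>J. A \<circ> T \<in> J \<and> T \<circ> A \<in> J)"

text \<open>dim(M/L) < \<infinity>: M/L is contained in the span of finitely many cosets,
i.e. M \<subseteq> span F + L for a finite F.\<close>
definition fin_dim_quot :: "'a::complex_banach set \<Rightarrow> 'a set \<Rightarrow> bool" where
  "fin_dim_quot M L \<longleftrightarrow> (\<exists>F. finite F \<and> M \<subseteq> {u + l | u l. u \<in> cspan F \<and> l \<in> L})"

definition ess_support :: "'a::complex_banach set set \<Rightarrow> ('a \<Rightarrow> 'a) set \<Rightarrow> 'a set \<Rightarrow> 'a set" where
  "ess_support \<E> J N = \<Inter> {L \<in> \<E>. \<forall>T\<in>J. fin_dim_quot (T ` N) L}"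

definition annihilator :: "'a::complex_banach set \<Rightarrow> ('a \<Rightarrow> complex) set" where
  "annihilator S = {f. bounded_functional f \<and> (\<forall>x\<in>S. f x = 0)}"

definition rank_one :: "('a::complex_banach \<Rightarrow> complex) \<Rightarrow> 'a \<Rightarrow> 'a \<Rightarrow> 'a" where
  "rank_one f x = (\<lambda>y. f y *\<^sub>C x)"

end

theory Submission
  imports Defs
begin

text \<open>Since \<open>L\<^sub>- \<subset> \<Phi>\<^sup>e(N)\<close>, some \<open>T \<in> J\<close> and \<open>y \<in> N\<close> have \<open>T y \<notin> L\<^sub>-\<close>, and Hahn-Banach gives
  \<open>g \<in> (L\<^sub>-)\<^sup>\<perp>\<close> with \<open>g (T y) \<noteq> 0\<close>. A rank-one operator \<open>h \<otimes> z\<close> with \<open>h \<in> (K\<^sub>-)\<^sup>\<perp>\<close> and \<open>z \<in> K\<close>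
  leaves every member of the nest invariant (such a member either lies in \<open>K\<^sub>-\<close>, where \<open>h\<close> vanishes,
  or contains \<open>K\<close>), so \<open>f \<otimes> y\<close> and \<open>g \<otimes> x\<close> lie in \<open>\<T>(\<E>)\<close>, and
  \<open>(g \<otimes> x) T (f \<otimes> y) = g (T y) \<cdot> (f \<otimes> x)\<close> lies in \<open>J\<close>.\<close>

section \<open>Hahn-Banach for norm-dominated real functionals\<close>

text \<open>Partially defined functionals are handled through their graphs, which makes the union of a
  chain immediate.\<close>

definition dominated_graph :: "('a::real_normed_vector \<times> real) set \<Rightarrow> bool" where
  "dominated_graph G \<longleftrightarrow> (0, 0) \<in> G
     \<and> (\<forall>x a y b. (x, a) \<in> G \<longrightarrow> (y, b) \<in> G \<longrightarrow> (x + y, a + b) \<in> G)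
     \<and> (\<forall>t x a. (x, a) \<in> G \<longrightarrow> (t *\<^sub>R x, t * a) \<in> G)
     \<and> (\<forall>x a b. (x, a) \<in> G \<longrightarrow> (x, b) \<in> G \<longrightarrow> a = b)
     \<and> (\<forall>x a. (x, a) \<in> G \<longrightarrow> a \<le> norm x)"

definition graph_extend :: "('a::real_normed_vector \<times> real) set \<Rightarrow> 'a \<Rightarrow> real \<Rightarrow> ('a \<times> real) set"
  where "graph_extend G x0 c = {(x + t *\<^sub>R x0, a + t * c) | x a t. (x, a) \<in> G}"

lemma dominated_graph_zero: "dominated_graph G \<Longrightarrow> (0, 0) \<in> G"
  and dominated_graph_add: "dominated_graph G \<Longrightarrow> (x, a) \<in> G \<Longrightarrow> (y, b) \<in> G \<Longrightarrow> (x + y, a + b) \<in> G"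
  and dominated_graph_scaleR: "dominated_graph G \<Longrightarrow> (x, a) \<in> G \<Longrightarrow> (t *\<^sub>R x, t * a) \<in> G"
  and dominated_graph_unique: "dominated_graph G \<Longrightarrow> (x, a) \<in> G \<Longrightarrow> (x, b) \<in> G \<Longrightarrow> a = b"
  and dominated_graph_le_norm: "dominated_graph G \<Longrightarrow> (x, a) \<in> G \<Longrightarrow> a \<le> norm x"
  by (simp_all add: dominated_graph_def)

lemma dominated_graph_zero_on_subspace:
  assumes "0 \<in> M" "\<forall>x\<in>M. \<forall>y\<in>M. x + y \<in> M" "\<forall>t. \<forall>x\<in>M. t *\<^sub>R x \<in> M"
  shows "dominated_graph (M \<times> {0})"
  using assms by (auto simp: dominated_graph_def)

lemma extension_constant_exists:
  assumes G: "dominated_graph G"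
  shows "\<exists>c. \<forall>(x, a)\<in>G. a - norm (x - x0) \<le> c \<and> c \<le> norm (x + x0) - a"
proof -
  define S where "S = {a - norm (x - x0) | x a. (x, a) \<in> G}"
  have bound: "a - norm (x - x0) \<le> norm (y + x0) - b" if "(x, a) \<in> G" "(y, b) \<in> G" for x a y b
  proof -
    have "a + b \<le> norm ((x - x0) + (y + x0))"
      using dominated_graph_le_norm[OF G dominated_graph_add[OF G that]] by simp
    also have "\<dots> \<le> norm (x - x0) + norm (y + x0)" by (rule norm_triangle_ineq)
    finally show ?thesis by simp
  qed
  have "(0, 0) \<in> G" using dominated_graph_zero[OF G] .
  then have "S \<noteq> {}" and "bdd_above S"
    unfolding S_def bdd_above_def using bound by blast+
  then have "a - norm (x - x0) \<le> Sup S \<and> Sup S \<le> norm (x + x0) - a" if "(x, a) \<in> G" for x a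
    using that bound by (auto intro!: cSup_upper cSup_least simp: S_def)
  then show ?thesis by blast
qed

lemma graph_extend_le_norm:
  assumes G: "dominated_graph G" and c: "\<forall>(x, a)\<in>G. a - norm (x - x0) \<le> c \<and> c \<le> norm (x + x0) - a"
    and xa: "(x, a) \<in> G"
  shows "a + t * c \<le> norm (x + t *\<^sub>R x0)"
proof -
  consider "t = 0" | "t > 0" | "t < 0" by linarith
  then show ?thesis
  proof cases
    case 1
    then show ?thesis using dominated_graph_le_norm[OF G xa] by simp
  next
    case 2
    have "((1 / t) *\<^sub>R x, (1 / t) * a) \<in> G" by (rule dominated_graph_scaleR[OF G xa])
    then have "t * c \<le> t * (norm ((1 / t) *\<^sub>R x + x0) - (1 / t) * a)"
      using c 2 by (auto intro: mult_left_mono)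
    also have "\<dots> = norm (t *\<^sub>R ((1 / t) *\<^sub>R x + x0)) - a" using 2 by (simp add: right_diff_distrib)
    also have "t *\<^sub>R ((1 / t) *\<^sub>R x + x0) = x + t *\<^sub>R x0" using 2 by (simp add: scaleR_add_right)
    finally show ?thesis by simp
  next
    case 3
    define s where "s = - t"
    have s: "s > 0" using 3 by (simp add: s_def)
    have "((1 / s) *\<^sub>R x, (1 / s) * a) \<in> G" by (rule dominated_graph_scaleR[OF G xa])
    then have "s * ((1 / s) * a - norm ((1 / s) *\<^sub>R x - x0)) \<le> s * c"
      using c s by (auto intro: mult_left_mono)
    also have "s * ((1 / s) * a - norm ((1 / s) *\<^sub>R x - x0)) = a - norm (s *\<^sub>R ((1 / s) *\<^sub>R x - x0))"
      using s by (simp add: right_diff_distrib)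
    also have "s *\<^sub>R ((1 / s) *\<^sub>R x - x0) = x + t *\<^sub>R x0" using s by (simp add: s_def scaleR_diff_right)
    finally show ?thesis by (simp add: s_def)
  qed
qed

lemma dominated_graph_extend:
  assumes G: "dominated_graph G" and x0: "x0 \<notin> Domain G"
    and c: "\<forall>(x, a)\<in>G. a - norm (x - x0) \<le> c \<and> c \<le> norm (x + x0) - a"
  shows "dominated_graph (graph_extend G x0 c)"
  unfolding dominated_graph_def
proof (intro conjI allI impI)
  show "(0, 0) \<in> graph_extend G x0 c"
    unfolding graph_extend_def using G by (force simp: dominated_graph_def)
next
  fix x a y b assume "(x, a) \<in> graph_extend G x0 c" "(y, b) \<in> graph_extend G x0 c"
  then obtain x1 a1 t1 x2 a2 t2 where "(x1, a1) \<in> G" "(x2, a2) \<in> G"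
      "x = x1 + t1 *\<^sub>R x0" "a = a1 + t1 * c" "y = x2 + t2 *\<^sub>R x0" "b = a2 + t2 * c"
    unfolding graph_extend_def by blast
  moreover have "x + y = (x1 + x2) + (t1 + t2) *\<^sub>R x0" "a + b = (a1 + a2) + (t1 + t2) * c"
    using calculation by (auto simp: algebra_simps)
  ultimately show "(x + y, a + b) \<in> graph_extend G x0 c"
    unfolding graph_extend_def using dominated_graph_add[OF G] by blast
next
  fix t x a assume "(x, a) \<in> graph_extend G x0 c"
  then obtain x1 a1 t1 where "(x1, a1) \<in> G" "x = x1 + t1 *\<^sub>R x0" "a = a1 + t1 * c"
    unfolding graph_extend_def by blast
  moreover have "t *\<^sub>R x = t *\<^sub>R x1 + (t * t1) *\<^sub>R x0" "t * a = t * a1 + (t * t1) * c"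
    using calculation by (auto simp: algebra_simps)
  ultimately show "(t *\<^sub>R x, t * a) \<in> graph_extend G x0 c"
    unfolding graph_extend_def using dominated_graph_scaleR[OF G] by blast
next
  fix x a b assume "(x, a) \<in> graph_extend G x0 c" "(x, b) \<in> graph_extend G x0 c"
  then obtain x1 a1 t1 x2 a2 t2 where h: "(x1, a1) \<in> G" "(x2, a2) \<in> G"
      "x = x1 + t1 *\<^sub>R x0" "a = a1 + t1 * c" "x = x2 + t2 *\<^sub>R x0" "b = a2 + t2 * c"
    unfolding graph_extend_def by blast
  have "t1 = t2"
  proof (rule ccontr)
    assume ne: "t1 \<noteq> t2"
    have "(x2 + (-1) *\<^sub>R x1, a2 + (-1) * a1) \<in> G"
      using h dominated_graph_add[OF G] dominated_graph_scaleR[OF G] by blast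
    then have "((1 / (t1 - t2)) *\<^sub>R (x2 + (-1) *\<^sub>R x1), (1 / (t1 - t2)) * (a2 + (-1) * a1)) \<in> G"
      by (rule dominated_graph_scaleR[OF G])
    moreover have "x2 - x1 = (t1 - t2) *\<^sub>R x0" using h by (simp add: algebra_simps)
    then have "(1 / (t1 - t2)) *\<^sub>R (x2 + (-1) *\<^sub>R x1) = x0"
      using ne by (simp add: scaleR_diff_right[symmetric])
    ultimately show False using x0 by (metis Domain.DomainI)
  qed
  with h dominated_graph_unique[OF G] show "a = b" by auto
next
  fix x a assume "(x, a) \<in> graph_extend G x0 c"
  then obtain x1 a1 t where "(x1, a1) \<in> G" "x = x1 + t *\<^sub>R x0" "a = a1 + t * c"
    unfolding graph_extend_def by blast
  then show "a \<le> norm x" using graph_extend_le_norm[OF G c] by simp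
qed

lemma graph_extend_contains: "G \<subseteq> graph_extend G x0 c"
proof
  fix p assume "p \<in> G"
  then show "p \<in> graph_extend G x0 c"
    unfolding graph_extend_def by (intro CollectI exI[of _ "fst p"] exI[of _ "snd p"] exI[of _ 0]) simp
qed

lemma graph_extend_point: "(0, 0) \<in> G \<Longrightarrow> (x0, c) \<in> graph_extend G x0 c"
  unfolding graph_extend_def by (intro CollectI exI[of _ 0] exI[of _ 0] exI[of _ 1]) simp

lemma dominated_graph_Union_chain:
  assumes "C \<noteq> {}" "\<forall>G\<in>C. dominated_graph G" "\<forall>X\<in>C. \<forall>Y\<in>C. X \<subseteq> Y \<or> Y \<subseteq> X"
  shows "dominated_graph (\<Union>C)"
proof -
  have two: "\<exists>G\<in>C. p \<in> G \<and> q \<in> G" if "p \<in> \<Union>C" "q \<in> \<Union>C" for p q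
    using that assms(3) by blast
  show ?thesis
    unfolding dominated_graph_def
  proof (intro conjI allI impI)
    show "(0, 0) \<in> \<Union>C" using assms(1,2) by (auto simp: dominated_graph_def)
  next
    fix x a y b assume "(x, a) \<in> \<Union>C" "(y, b) \<in> \<Union>C"
    then show "(x + y, a + b) \<in> \<Union>C" using two assms(2) by (meson UnionI dominated_graph_add)
  next
    fix t x a assume "(x, a) \<in> \<Union>C"
    then show "(t *\<^sub>R x, t * a) \<in> \<Union>C" using assms(2) by (meson UnionE UnionI dominated_graph_scaleR)
  next
    fix x a b assume "(x, a) \<in> \<Union>C" "(x, b) \<in> \<Union>C"
    then show "a = b" using two assms(2) by (meson dominated_graph_unique)
  next
    fix x a assume "(x, a) \<in> \<Union>C"
    then show "a \<le> norm x" using assms(2) by (meson UnionE dominated_graph_le_norm)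
  qed
qed

theorem Hahn_Banach_graph:
  assumes G0: "dominated_graph G0"
  shows "\<exists>\<phi>. (\<forall>x y. \<phi> (x + y) = \<phi> x + \<phi> y) \<and> (\<forall>t x. \<phi> (t *\<^sub>R x) = t * \<phi> x)
     \<and> (\<forall>x. \<phi> x \<le> norm x) \<and> (\<forall>(x, a)\<in>G0. \<phi> x = a)"
proof -
  define A where "A = {G. dominated_graph G \<and> G0 \<subseteq> G}"
  have "\<exists>G\<in>A. \<forall>X\<in>A. G \<subseteq> X \<longrightarrow> X = G"
  proof (rule subset_Zorn_nonempty)
    show "A \<noteq> {}" using G0 by (auto simp: A_def)
  next
    fix C assume "C \<noteq> {}" "subset.chain A C"
    then show "\<Union>C \<in> A"
      using dominated_graph_Union_chain[OF \<open>C \<noteq> {}\<close>] by (auto simp: A_def subset.chain_def)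
  qed
  then obtain G where G: "dominated_graph G" and G0G: "G0 \<subseteq> G"
    and max: "\<And>X. dominated_graph X \<Longrightarrow> G \<subseteq> X \<Longrightarrow> X = G"
    by (auto simp: A_def)
  have total: "x \<in> Domain G" for x
  proof (rule ccontr)
    assume x: "x \<notin> Domain G"
    obtain c where c: "\<forall>(y, a)\<in>G. a - norm (y - x) \<le> c \<and> c \<le> norm (y + x) - a"
      using extension_constant_exists[OF G] by blast
    have "graph_extend G x c = G"
      using max dominated_graph_extend[OF G x c] graph_extend_contains by blast
    then show False using graph_extend_point[OF dominated_graph_zero[OF G]] x by (metis Domain.DomainI)
  qed
  define \<phi> where "\<phi> x = (SOME a. (x, a) \<in> G)" for x
  have \<phi>G: "(x, \<phi> x) \<in> G" for x using total[of x] unfolding \<phi>_def by (auto intro: someI)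
  have \<phi>_eq: "\<phi> x = a" if "(x, a) \<in> G" for x a using dominated_graph_unique[OF G \<phi>G that] .
  show ?thesis
  proof (intro exI conjI allI ballI)
    fix x y show "\<phi> (x + y) = \<phi> x + \<phi> y" by (rule \<phi>_eq[OF dominated_graph_add[OF G \<phi>G \<phi>G]])
  next
    fix t x show "\<phi> (t *\<^sub>R x) = t * \<phi> x" by (rule \<phi>_eq[OF dominated_graph_scaleR[OF G \<phi>G]])
  next
    fix x show "\<phi> x \<le> norm x" by (rule dominated_graph_le_norm[OF G \<phi>G])
  next
    fix p assume "p \<in> G0"
    then show "case p of (x, a) \<Rightarrow> \<phi> x = a" using G0G \<phi>_eq by auto
  qed
qed

lemma real_functional_separates_point:
  fixes M :: "'a::real_normed_vector set"
  assumes M: "0 \<in> M" "\<forall>x\<in>M. \<forall>y\<in>M. x + y \<in> M" "\<forall>t. \<forall>x\<in>M. t *\<^sub>R x \<in> M"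
    and closed: "closed M" and w: "w \<notin> M"
  shows "\<exists>\<phi>. (\<forall>x y. \<phi> (x + y) = \<phi> x + \<phi> y) \<and> (\<forall>t x. \<phi> (t *\<^sub>R x) = t * \<phi> x)
     \<and> (\<forall>x. \<phi> x \<le> norm x) \<and> (\<forall>m\<in>M. \<phi> m = 0) \<and> \<phi> w \<noteq> 0"
proof -
  define d where "d = infdist w M"
  have d: "d > 0" unfolding d_def using infdist_pos_not_in_closed[OF closed _ w] M(1) by blast
  have G: "dominated_graph (M \<times> {0})" using dominated_graph_zero_on_subspace[OF M] .
  have bound: "- norm (m - w) \<le> d \<and> d \<le> norm (m + w)" if "m \<in> M" for m
  proof -
    have "(- 1) *\<^sub>R m \<in> M" using M(3) that by blast
    then have "- m \<in> M" by simp
    then have "d \<le> dist w (- m)" unfolding d_def by (rule infdist_le)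
    then have "d \<le> norm (m + w)" by (simp add: dist_norm add.commute)
    with d norm_ge_zero[of "m - w"] show ?thesis by linarith
  qed
  then have c: "\<forall>(x, a)\<in>M \<times> {0}. a - norm (x - w) \<le> d \<and> d \<le> norm (x + w) - a" by auto
  have "w \<notin> Domain (M \<times> {0})" using w by auto
  from dominated_graph_extend[OF G this c]
  have ext: "dominated_graph (graph_extend (M \<times> {0}) w d)" .
  obtain \<phi> where \<phi>: "\<forall>x y. \<phi> (x + y) = \<phi> x + \<phi> y" "\<forall>t x. \<phi> (t *\<^sub>R x) = t * \<phi> x"
      "\<forall>x. \<phi> x \<le> norm x" "\<forall>(x, a)\<in>graph_extend (M \<times> {0}) w d. \<phi> x = a"
    using Hahn_Banach_graph[OF ext] by (elim exE conjE)
  have "\<phi> m = 0" if "m \<in> M" for m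
  proof -
    have "(m, 0) \<in> graph_extend (M \<times> {0}) w d" by (rule subsetD[OF graph_extend_contains]) (simp add: that)
    from bspec[OF \<phi>(4) this] show ?thesis by simp
  qed
  moreover have "\<phi> w = d"
    using bspec[OF \<phi>(4) graph_extend_point[OF dominated_graph_zero[OF G]]] by simp
  ultimately show ?thesis using \<phi>(1-3) d by (intro exI[of _ \<phi>] conjI) auto
qed

section \<open>Complexification and annihilators\<close>

lemma scaleC_zero_left: "(0::complex) *\<^sub>C (x::'a::complex_banach) = 0"
  using scaleC_of_real[of 0 x] by simp

lemma scaleC_ii: "\<i> *\<^sub>C (\<i> *\<^sub>C x) = - (x::'a::complex_banach)"
  using scaleC_of_real[of "-1" x] by (simp add: scaleC_scaleC)

lemma scaleC_Re_Im: "c *\<^sub>C (x::'a::complex_banach) = Re c *\<^sub>R x + Im c *\<^sub>R (\<i> *\<^sub>C x)"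
proof -
  have "c = complex_of_real (Re c) + complex_of_real (Im c) * \<i>" by (simp add: complex_eq_iff)
  then have "c *\<^sub>C x = complex_of_real (Re c) *\<^sub>C x + complex_of_real (Im c) *\<^sub>C (\<i> *\<^sub>C x)"
    by (metis scaleC_add_left scaleC_scaleC)
  then show ?thesis by (simp add: scaleC_of_real)
qed

lemma scaleC_scaleR_commute: "c *\<^sub>C (t *\<^sub>R x) = t *\<^sub>R (c *\<^sub>C (x::'a::complex_banach))"
  by (metis scaleC_of_real scaleC_scaleC mult.commute)

lemma bounded_functional_complexify:
  fixes \<phi> :: "'a::complex_banach \<Rightarrow> real"
  assumes add: "\<And>x y. \<phi> (x + y) = \<phi> x + \<phi> y" and scale: "\<And>t x. \<phi> (t *\<^sub>R x) = t * \<phi> x"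
    and bound: "\<And>x. \<phi> x \<le> norm x"
  shows "bounded_functional (\<lambda>x. complex_of_real (\<phi> x) - \<i> * complex_of_real (\<phi> (\<i> *\<^sub>C x)))"
    (is "bounded_functional ?g")
proof -
  have neg: "\<phi> (- x) = - \<phi> x" for x using scale[of "-1" x] by simp
  have abs_bound: "\<bar>\<phi> x\<bar> \<le> norm x" for x using bound[of x] bound[of "- x"] by (simp add: neg)
  have "?g (x + y) = ?g x + ?g y" for x y
    by (simp add: scaleC_add_right add algebra_simps)
  moreover have "?g (c *\<^sub>C x) = c * ?g x" for c x
  proof -
    have cx: "c *\<^sub>C x = Re c *\<^sub>R x + Im c *\<^sub>R (\<i> *\<^sub>C x)" by (rule scaleC_Re_Im)
    then have icx: "\<i> *\<^sub>C (c *\<^sub>C x) = Re c *\<^sub>R (\<i> *\<^sub>C x) + Im c *\<^sub>R (- x)"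
      by (simp only: scaleC_add_right scaleC_scaleR_commute scaleC_ii)
    have "?g (c *\<^sub>C x) = complex_of_real (Re c * \<phi> x + Im c * \<phi> (\<i> *\<^sub>C x))
        - \<i> * complex_of_real (Re c * \<phi> (\<i> *\<^sub>C x) + Im c * - \<phi> x)"
      by (subst icx, subst cx, simp only: add scale neg)
    also have "\<dots> = c * ?g x" by (simp add: complex_eq_iff algebra_simps)
    finally show ?thesis .
  qed
  moreover have "norm (?g x) \<le> norm x * 2" for x
  proof -
    have "norm (?g x) \<le> norm (complex_of_real (\<phi> x)) + norm (\<i> * complex_of_real (\<phi> (\<i> *\<^sub>C x)))"
      by (rule norm_triangle_ineq4)
    also have "\<dots> = \<bar>\<phi> x\<bar> + \<bar>\<phi> (\<i> *\<^sub>C x)\<bar>" by (simp add: norm_mult)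
    also have "\<dots> \<le> norm x + norm (\<i> *\<^sub>C x)" by (intro add_mono abs_bound)
    finally show ?thesis by (simp add: norm_scaleC)
  qed
  ultimately show ?thesis unfolding bounded_functional_def by blast
qed

lemma annihilator_separates_point:
  assumes "closed_csubspace M" "w \<notin> M"
  shows "\<exists>g\<in>annihilator M. g w \<noteq> 0"
proof -
  have M: "0 \<in> M" "\<forall>x\<in>M. \<forall>y\<in>M. x + y \<in> M" "\<forall>c. \<forall>x\<in>M. c *\<^sub>C x \<in> M" and "closed M"
    using assms(1) by (auto simp: closed_csubspace_def csubspace_def)
  moreover have "\<forall>t. \<forall>x\<in>M. t *\<^sub>R x \<in> M" using M(3) by (metis scaleC_of_real)
  ultimately obtain \<phi> where \<phi>: "\<And>x y. \<phi> (x + y) = \<phi> x + \<phi> y" "\<And>t x. \<phi> (t *\<^sub>R x) = t * \<phi> x"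
      "\<And>x. \<phi> x \<le> norm x" "\<And>m. m \<in> M \<Longrightarrow> \<phi> m = 0" "\<phi> w \<noteq> 0"
    using real_functional_separates_point[OF M(1,2) _ _ assms(2)] by blast
  define g where "g x = complex_of_real (\<phi> x) - \<i> * complex_of_real (\<phi> (\<i> *\<^sub>C x))" for x
  have "bounded_functional g" unfolding g_def by (rule bounded_functional_complexify[OF \<phi>(1-3)])
  moreover have "g m = 0" if "m \<in> M" for m using that M(3) \<phi>(4) by (simp add: g_def)
  moreover have "g w \<noteq> 0" using \<phi>(5) by (simp add: g_def complex_eq_iff)
  ultimately show ?thesis by (auto simp: annihilator_def)
qed

section \<open>Rank-one operators and the nest algebra\<close>

lemma subset_cspan: "A \<subseteq> cspan A"
  unfolding cspan_def by blast

lemma subset_cjoin: "A \<in> F \<Longrightarrow> A \<subseteq> cjoin F"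
  unfolding cjoin_def by (meson Union_upper closure_subset subset_cspan subset_trans)

lemma nest_minus_in_nest: "nest \<E> \<Longrightarrow> nest_minus \<E> E \<in> \<E>"
  unfolding nest_minus_def nest_def by auto

lemma nest_subset_of_not_subset_minus:
  assumes "nest \<E>" "E \<in> \<E>" "K \<in> \<E>" "\<not> E \<subseteq> nest_minus \<E> K"
  shows "K \<subseteq> E"
proof -
  have "\<not> E \<subset> K" using assms(2,4) subset_cjoin[of E "{F \<in> \<E>. F \<subset> K}"] unfolding nest_minus_def by blast
  moreover have "E \<subseteq> K \<or> K \<subseteq> E" using assms(1-3) by (auto simp: nest_def)
  ultimately show ?thesis by blast
qed

lemma bounded_op_rank_one: "bounded_functional h \<Longrightarrow> bounded_op (rank_one h z)"
  unfolding bounded_op_def bounded_functional_def rank_one_def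
proof (elim conjE exE, intro conjI allI exI)
  fix C assume hC: "\<forall>a. norm (h a) \<le> norm a * C"
  fix a
  have "norm (h a *\<^sub>C z) \<le> (norm a * C) * norm z"
    using hC by (simp add: norm_scaleC mult_right_mono)
  then show "norm (h a *\<^sub>C z) \<le> norm a * (C * norm z)" by (simp add: mult.assoc)
qed (simp_all add: scaleC_add_left scaleC_scaleC)

lemma rank_one_in_nest_alg:
  assumes nest: "nest \<E>" and K: "K \<in> \<E>" and h: "h \<in> annihilator (nest_minus \<E> K)" and z: "z \<in> K"
  shows "rank_one h z \<in> nest_alg \<E>"
proof -
  have "rank_one h z ` E \<subseteq> E" if E: "E \<in> \<E>" for E
  proof -
    have cs: "csubspace E" using nest E by (auto simp: nest_def closed_csubspace_def)
    show ?thesis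
    proof (cases "E \<subseteq> nest_minus \<E> K")
      case True
      then show ?thesis
        using h cs by (auto simp: annihilator_def rank_one_def scaleC_zero_left csubspace_def)
    next
      case False
      then have "z \<in> E" using nest_subset_of_not_subset_minus[OF nest E K] z by blast
      then show ?thesis using cs by (auto simp: csubspace_def rank_one_def)
    qed
  qed
  then show ?thesis
    using h bounded_op_rank_one by (auto simp: nest_alg_def annihilator_def)
qed

lemma rank_one_sandwich:
  assumes "bounded_op T" "bounded_functional g"
  shows "rank_one g x \<circ> T \<circ> rank_one f y = (\<lambda>v. g (T y) *\<^sub>C rank_one f x v)"
  using assms by (auto simp: rank_one_def bounded_op_def bounded_functional_def scaleC_scaleC mult.commute)

lemma ess_support_le:
  assumes "K \<in> \<E>" "\<forall>T\<in>J. T ` N \<subseteq> K"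
  shows "ess_support \<E> J N \<subseteq> K"
proof -
  have "\<forall>T\<in>J. fin_dim_quot (T ` N) K"
    using assms(2) unfolding fin_dim_quot_def cspan_def csubspace_def
    by (intro ballI exI[of _ "{}"]) force
  then show ?thesis using assms(1) unfolding ess_support_def by blast
qed

theorem mainTheorem13:
  fixes \<E> :: "'a::complex_banach set set" and J :: "('a \<Rightarrow> 'a) set" and L N :: "'a set"
  assumes "nest \<E>" and "bimodule \<E> J"
    and "L \<in> \<E>" and "N \<in> \<E>"
    and "nest_minus \<E> L \<subset> ess_support \<E> J N"
  shows "\<forall>f \<in> annihilator (nest_minus \<E> N). \<forall>x \<in> L. rank_one f x \<in> J"
proof (intro ballI)
  fix f x assume f: "f \<in> annihilator (nest_minus \<E> N)" and x: "x \<in> L"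
  have Lm: "nest_minus \<E> L \<in> \<E>" using nest_minus_in_nest[OF assms(1)] .
  obtain T y where T: "T \<in> J" and y: "y \<in> N" and Ty: "T y \<notin> nest_minus \<E> L"
    using ess_support_le[OF Lm, of J N] assms(5) by blast
  obtain g where g: "g \<in> annihilator (nest_minus \<E> L)" and gTy: "g (T y) \<noteq> 0"
    using annihilator_separates_point Lm assms(1) Ty by (metis nest_def)
  have J: "\<forall>A\<in>nest_alg \<E>. \<forall>T\<in>J. A \<circ> T \<in> J \<and> T \<circ> A \<in> J" "\<forall>c. \<forall>T\<in>J. (\<lambda>x. c *\<^sub>C T x) \<in> J"
    and "bounded_op T" using assms(2) T by (auto simp: bimodule_def)
  then have "rank_one g x \<circ> T \<circ> rank_one f y \<in> J"
    using T rank_one_in_nest_alg[OF assms(1)] assms(3,4) f g x y by (metis comp_assoc)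
  then have "(\<lambda>v. (1 / g (T y)) *\<^sub>C (g (T y) *\<^sub>C rank_one f x v)) \<in> J"
    using J(2) rank_one_sandwich[OF \<open>bounded_op T\<close>] g by (auto simp: annihilator_def)
  then show "rank_one f x \<in> J" using gTy by (simp add: scaleC_scaleC scaleC_one)
qed

end
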